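(* Let $I$ be a conditional indicator w.r.t. $\mathcal{H}$ whose domain $\mathbb{D}_I$ is $\mathcal{H}$-decomposable. If $I$ is sub-additive, then $1_HI(X)\le I(1_HX)$ for all $H\in\mathcal{H}$ and $X\in\mathbb{D}_I$. Moreover, if $I$ is additive, then $I$ is regular.
   Context: Let $(\Omega,\mathcal{F},\mathbb{P})$ be a probability space with $\mathcal{F}$ complete, and $\mathcal{H}\subseteq\mathcal{F}$ a complete sub-$\sigma$-algebra. $\overline{\mathbb{R}}=\mathbb{R}\cup\{\pm\infty\}$ with conventions $r\pm\infty=\pm\infty$, $\infty-\infty=0$, $\infty+\infty=\infty$, $0\times(\pm\infty)=0$; $\mathbb{L}^0(G,\mathcal{G})$ is the set of $\mathcal{G}$-measurable random variables a.s. valued in $G$. $\operatorname{ess\,sup}_{\mathcal{H}}(X)$ is the smallest $\mathcal{H}$-measurable random variable dominating $X$ a.s., $\operatorname{ess\,inf}_{\mathcal{H}}(X)=-\operatorname{ess\,sup}_{\mathcal{H}}(-X)$. A conditional indicator w.r.t. $\mathcal{H}$ is a map $I:\mathbb{D}_I\to\mathbb{L}^0(\overline{\mathbb{R}},\mathcal{H})$, $0\in\mathbb{D}_I\subseteq\mathbb{L}^0(\overline{\mathbb{R}},\mathcal{F})$, with $I(X)\in[\operatorname{ess\,inf}_{\mathcal{H}}(X),\operatorname{ess\,sup}_{\mathcal{H}}(X)]$ a.s. and $\mathbb{D}_I+\mathbb{L}^0(\overline{\mathbb{R}},\mathcal{H})\subseteq\mathbb{D}_I$. $\mathbb{D}_I$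 is $\mathcal{H}$-decomposable if $X1_H+Y1_{\Omega\setminus H}\in\mathbb{D}_I$ for $X,Y\in\mathbb{D}_I$, $H\in\mathcal{H}$. Sub-additive: $I(X+Y)\le I(X)+I(Y)$; additive: equality. $I$ is regular if $\mathbb{D}_I$ is $\mathcal{H}$-decomposable and for $X,Y\in\mathbb{D}_I$, $H\in\mathcal{H}$, $X1_H=Y1_H$ implies $I(X)1_H=I(Y)1_H$. *)

theory Defs
  imports "HOL-Probability.Probability"
begin

text \<open>Standing setting: M is the probability space (Omega, F, P), F complete;
  N is the sub-sigma-algebra H (same space, sets N \<subseteq> sets M), complete in the
  sense that it contains every P-null set of F.  Random variables are functions
  into ereal (extended reals; Isabelle's ereal has inf - inf = 0, inf + -inf = 0,
  0 * inf = 0, matching the paper's conventions).\<close>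

definition complete_subalg :: "'a measure \<Rightarrow> 'a measure \<Rightarrow> bool" where
  "complete_subalg M N \<longleftrightarrow> subalgebra M N \<and> (\<forall>A \<in> null_sets M. A \<in> sets N)"

definition is_cond_ess_sup :: "'a measure \<Rightarrow> 'a measure \<Rightarrow> ('a \<Rightarrow> ereal) \<Rightarrow> ('a \<Rightarrow> ereal) \<Rightarrow> bool" where
  "is_cond_ess_sup M N X S \<longleftrightarrow> S \<in> borel_measurable N \<and> (AE \<omega> in M. X \<omega> \<le> S \<omega>) \<and>
     (\<forall>S' \<in> borel_measurable N. (AE \<omega> in M. X \<omega> \<le> S' \<omega>) \<longrightarrow> (AE \<omega> in M. S \<omega> \<le> S' \<omega>))"

definition cond_ess_sup :: "'a measure \<Rightarrow> 'a measure \<Rightarrow> ('a \<Rightarrow> ereal) \<Rightarrow> ('a \<Rightarrow> ereal)" where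
  "cond_ess_sup M N X = (SOME S. is_cond_ess_sup M N X S)"

definition cond_ess_inf :: "'a measure \<Rightarrow> 'a measure \<Rightarrow> ('a \<Rightarrow> ereal) \<Rightarrow> ('a \<Rightarrow> ereal)" where
  "cond_ess_inf M N X = (\<lambda>\<omega>. - cond_ess_sup M N (\<lambda>\<omega>'. - X \<omega>') \<omega>)"

text \<open>Conditional indicator I with domain D.  Since L^0 consists of a.s.-classes,
  we require D to be closed under a.s. modification and I to respect a.s. equality.\<close>
definition cond_indicator ::
  "'a measure \<Rightarrow> 'a measure \<Rightarrow> ('a \<Rightarrow> ereal) set \<Rightarrow> (('a \<Rightarrow> ereal) \<Rightarrow> ('a \<Rightarrow> ereal)) \<Rightarrow> bool" where
  "cond_indicator M N D I \<longleftrightarrow>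
     D \<subseteq> borel_measurable M \<and> (\<lambda>\<omega>. 0) \<in> D \<and>
     (\<forall>X \<in> D. \<forall>Y \<in> borel_measurable M. (AE \<omega> in M. X \<omega> = Y \<omega>) \<longrightarrow> Y \<in> D) \<and>
     (\<forall>X \<in> D. \<forall>Y \<in> D. (AE \<omega> in M. X \<omega> = Y \<omega>) \<longrightarrow> (AE \<omega> in M. I X \<omega> = I Y \<omega>)) \<and>
     (\<forall>X \<in> D. I X \<in> borel_measurable N) \<and>
     (\<forall>X \<in> D. AE \<omega> in M. cond_ess_inf M N X \<omega> \<le> I X \<omega> \<and> I X \<omega> \<le> cond_ess_sup M N X \<omega>) \<and>
     (\<forall>X \<in> D. \<forall>Z \<in> borel_measurable N. (\<lambda>\<omega>. X \<omega> + Z \<omega>) \<in> D)"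

definition decomposable :: "'a measure \<Rightarrow> ('a \<Rightarrow> ereal) set \<Rightarrow> bool" where
  "decomposable N D \<longleftrightarrow>
     (\<forall>X \<in> D. \<forall>Y \<in> D. \<forall>A \<in> sets N.
        (\<lambda>\<omega>. X \<omega> * indicator A \<omega> + Y \<omega> * indicator (space N - A) \<omega>) \<in> D)"

definition sub_additive :: "'a measure \<Rightarrow> ('a \<Rightarrow> ereal) set \<Rightarrow> (('a \<Rightarrow> ereal) \<Rightarrow> ('a \<Rightarrow> ereal)) \<Rightarrow> bool" where
  "sub_additive M D I \<longleftrightarrow>
     (\<forall>X \<in> D. \<forall>Y \<in> D. (\<lambda>\<omega>. X \<omega> + Y \<omega>) \<in> D \<longrightarrow>
        (AE \<omega> in M. I (\<lambda>\<omega>'. X \<omega>' + Y \<omega>') \<omega> \<le> I X \<omega> + I Y \<omega>))"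

definition additive :: "'a measure \<Rightarrow> ('a \<Rightarrow> ereal) set \<Rightarrow> (('a \<Rightarrow> ereal) \<Rightarrow> ('a \<Rightarrow> ereal)) \<Rightarrow> bool" where
  "additive M D I \<longleftrightarrow>
     (\<forall>X \<in> D. \<forall>Y \<in> D. (\<lambda>\<omega>. X \<omega> + Y \<omega>) \<in> D \<longrightarrow>
        (AE \<omega> in M. I (\<lambda>\<omega>'. X \<omega>' + Y \<omega>') \<omega> = I X \<omega> + I Y \<omega>))"

definition regular :: "'a measure \<Rightarrow> 'a measure \<Rightarrow> ('a \<Rightarrow> ereal) set \<Rightarrow> (('a \<Rightarrow> ereal) \<Rightarrow> ('a \<Rightarrow> ereal)) \<Rightarrow> bool" where
  "regular M N D I \<longleftrightarrow> decomposable N D \<and>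
     (\<forall>X \<in> D. \<forall>Y \<in> D. \<forall>A \<in> sets N.
        (AE \<omega> in M. X \<omega> * indicator A \<omega> = Y \<omega> * indicator A \<omega>) \<longrightarrow>
        (AE \<omega> in M. I X \<omega> * indicator A \<omega> = I Y \<omega> * indicator A \<omega>))"

end

theory Submission
  imports Defs
begin

(* The conditional essential supremum exists: the N-measurable a.s. majorants of X are closed
   under countable infima, so one of them minimises the bounded, strictly monotone functional
   S \<mapsto> \<integral> arctan (S \<omega>) dM, and comparing it with its minimum with any other majorant shows
   that it lies a.s. below all of them.  Hence, if Z vanishes on A \<in> N, so do the conditional
   essential infimum and supremum of Z, and with them I Z.
   Decomposability puts X\<^sub>A = 1\<^sub>A X and X\<^sub>B = 1\<^sub>{\<Omega>-A} X into D, and I X = I (X\<^sub>A + X\<^sub>B) a.s.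
   since the sum equals X.  On A the term I X\<^sub>B vanishes, and off A so does I X\<^sub>A; sub-additivity
   thus yields 1\<^sub>A I X \<le> I X\<^sub>A, and additivity yields I X = I X\<^sub>A on A, which is regularity. *)

lemma exists_minimiser_of_countable_INF_closed:
  fixes \<Phi> :: "'a::complete_lattice \<Rightarrow> real"
  assumes "SS \<noteq> {}" and bdd: "bdd_below (\<Phi> ` SS)"
    and mono: "\<And>S S'. S \<in> SS \<Longrightarrow> S' \<in> SS \<Longrightarrow> S \<le> S' \<Longrightarrow> \<Phi> S \<le> \<Phi> S'"
    and INF_closed: "\<And>F :: nat \<Rightarrow> _. range F \<subseteq> SS \<Longrightarrow> (INF n. F n) \<in> SS"
  shows "\<exists>S\<in>SS. \<forall>S'\<in>SS. \<Phi> S \<le> \<Phi> S'"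
proof -
  define c where "c = Inf (\<Phi> ` SS)"
  have "\<exists>S\<in>SS. \<Phi> S < c + 1 / Suc n" for n :: nat
    using cInf_lessD[of "\<Phi> ` SS" "c + 1 / Suc n"] \<open>SS \<noteq> {}\<close> by (auto simp: c_def)
  then obtain F where F: "\<And>n. F n \<in> SS" "\<And>n. \<Phi> (F n) < c + 1 / Suc n" by metis
  define S where "S = (INF n. F n)"
  have "S \<in> SS" unfolding S_def using F(1) INF_closed[of F] by auto
  have "\<Phi> S \<le> c"
  proof (rule field_le_epsilon)
    fix e :: real assume "0 < e"
    then obtain n :: nat where "1 / Suc n < e" by (rule nat_approx_posE)
    moreover have "\<Phi> S \<le> \<Phi> (F n)"
      using \<open>S \<in> SS\<close> F(1) by (intro mono) (auto simp: S_def INF_lower)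
    ultimately show "\<Phi> S \<le> c + e" using F(2)[of n] by linarith
  qed
  moreover have "c \<le> \<Phi> S'" if "S' \<in> SS" for S'
    unfolding c_def using bdd that by (intro cInf_lower) auto
  ultimately show ?thesis using \<open>S \<in> SS\<close> by force
qed

definition arctan_ereal :: "ereal \<Rightarrow> real" where
  "arctan_ereal x = (case x of ereal r \<Rightarrow> arctan r | PInfty \<Rightarrow> pi / 2 | MInfty \<Rightarrow> - (pi / 2))"

lemma arctan_ereal_strict_mono: "strict_mono arctan_ereal"
proof
  fix x y :: ereal
  assume "x < y"
  then show "arctan_ereal x < arctan_ereal y"
    using arctan_bounded by (cases x; cases y) (auto simp: arctan_ereal_def arctan_less_iff)
qed

lemma arctan_ereal_le_iff [simp]: "arctan_ereal x \<le> arctan_ereal y \<longleftrightarrow> x \<le> y"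
  using arctan_ereal_strict_mono by (simp add: strict_mono_less_eq)

lemma arctan_ereal_eq_iff [simp]: "arctan_ereal x = arctan_ereal y \<longleftrightarrow> x = y"
  using arctan_ereal_strict_mono by (simp add: strict_mono_eq)

lemma abs_arctan_ereal_le: "\<bar>arctan_ereal x\<bar> \<le> pi / 2"
  using arctan_bounded[of "real_of_ereal x"]
  by (cases x) (auto simp: arctan_ereal_def abs_le_iff less_imp_le)

lemma borel_measurable_arctan_ereal [measurable]:
  "S \<in> borel_measurable M \<Longrightarrow> (\<lambda>x. arctan_ereal (S x)) \<in> borel_measurable M"
  by (rule borel_measurable_ereal_cases) (auto simp: arctan_ereal_def)

lemma exists_AE_least_of_countable_INF_closed:
  fixes SS :: "('a \<Rightarrow> ereal) set"
  assumes "finite_measure M" and SS_meas: "SS \<subseteq> borel_measurable M" and "SS \<noteq> {}"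
    and INF_closed: "\<And>F :: nat \<Rightarrow> _. range F \<subseteq> SS \<Longrightarrow> (INF n. F n) \<in> SS"
  shows "\<exists>S\<in>SS. \<forall>S'\<in>SS. AE \<omega> in M. S \<omega> \<le> S' \<omega>"
proof -
  interpret finite_measure M by fact
  define \<Phi> where "\<Phi> S = (\<integral>\<omega>. arctan_ereal (S \<omega>) \<partial>M)" for S :: "'a \<Rightarrow> ereal"
  have integrable: "integrable M (\<lambda>\<omega>. arctan_ereal (S \<omega>))" if "S \<in> SS" for S
    using that SS_meas abs_arctan_ereal_le
    by (intro integrable_const_bound[where B="pi / 2"]) auto
  have "- (pi / 2) \<le> arctan_ereal x" for x
    using abs_arctan_ereal_le[of x] by linarith
  then have "(\<integral>\<omega>. - (pi / 2) \<partial>M) \<le> \<Phi> S" if "S \<in> SS" for S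
    unfolding \<Phi>_def using that by (intro integral_mono integrable) auto
  then have "bdd_below (\<Phi> ` SS)" by (auto simp: bdd_below_def)
  moreover have \<Phi>_mono: "\<Phi> S \<le> \<Phi> S'" if "S \<in> SS" "S' \<in> SS" "S \<le> S'" for S S'
    unfolding \<Phi>_def using that by (intro integral_mono integrable) (auto simp: le_fun_def)
  ultimately obtain S where "S \<in> SS" and S_min: "\<And>S'. S' \<in> SS \<Longrightarrow> \<Phi> S \<le> \<Phi> S'"
    using exists_minimiser_of_countable_INF_closed[of SS \<Phi>] \<open>SS \<noteq> {}\<close> INF_closed by blast
  have "AE \<omega> in M. S \<omega> \<le> S' \<omega>" if "S' \<in> SS" for S'
  proof -
    define R where "R = inf S S'"
    have "range (\<lambda>n::nat. if n = 0 then S else S') = {S, S'}"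
      by (auto intro: range_eqI[where x = 1])
    then have "R \<in> SS"
      using INF_closed[of "\<lambda>n. if n = 0 then S else S'"] \<open>S \<in> SS\<close> \<open>S' \<in> SS\<close>
      by (auto simp: R_def)
    moreover have "R \<le> S" by (simp add: R_def)
    ultimately have "\<Phi> R = \<Phi> S"
      using S_min[of R] \<Phi>_mono[of R S] \<open>S \<in> SS\<close> by simp
    with \<open>R \<in> SS\<close> \<open>S \<in> SS\<close> \<open>R \<le> S\<close>
    have "AE \<omega> in M. arctan_ereal (R \<omega>) = arctan_ereal (S \<omega>)"
      by (intro integral_ineq_eq_0_then_AE integrable) (auto simp: \<Phi>_def le_fun_def)
    then show ?thesis by eventually_elim (auto simp: R_def min_def split: if_splits)
  qed
  with \<open>S \<in> SS\<close> show ?thesis by blast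
qed

lemma is_cond_ess_sup_exists:
  assumes "finite_measure M" and "subalgebra M N" and "X \<in> borel_measurable M"
  shows "\<exists>S. is_cond_ess_sup M N X S"
proof -
  define SS where "SS = {S \<in> borel_measurable N. AE \<omega> in M. X \<omega> \<le> S \<omega>}"
  have "SS \<subseteq> borel_measurable M"
    using measurable_from_subalg[OF \<open>subalgebra M N\<close>] by (auto simp: SS_def)
  moreover have "(\<lambda>_. \<infinity>) \<in> SS" by (simp add: SS_def)
  moreover have "(INF n. F n) \<in> SS" if "range F \<subseteq> SS" for F :: "nat \<Rightarrow> 'a \<Rightarrow> ereal"
  proof -
    have "F n \<in> borel_measurable N" for n
      using that by (auto simp: SS_def)
    then have "(\<lambda>\<omega>. INF n. F n \<omega>) \<in> borel_measurable N" by measurable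
    moreover have "AE \<omega> in M. \<forall>n. X \<omega> \<le> F n \<omega>"
      using that by (auto simp: SS_def AE_all_countable)
    then have "AE \<omega> in M. X \<omega> \<le> (INF n. F n \<omega>)"
      by eventually_elim (auto intro: INF_greatest)
    moreover have "(INF n. F n) = (\<lambda>\<omega>. INF n. F n \<omega>)" by (simp add: fun_eq_iff image_comp)
    ultimately show ?thesis unfolding SS_def by simp
  qed
  ultimately obtain S where "S \<in> SS" "\<And>S'. S' \<in> SS \<Longrightarrow> AE \<omega> in M. S \<omega> \<le> S' \<omega>"
    using exists_AE_least_of_countable_INF_closed[OF \<open>finite_measure M\<close>, of SS] by blast
  then have "is_cond_ess_sup M N X S" by (auto simp: is_cond_ess_sup_def SS_def)
  then show ?thesis by blast
qed

lemma is_cond_ess_sup_cond_ess_sup: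
  assumes "finite_measure M" and "subalgebra M N" and "X \<in> borel_measurable M"
  shows "is_cond_ess_sup M N X (cond_ess_sup M N X)"
  unfolding cond_ess_sup_def using is_cond_ess_sup_exists[OF assms] by (rule someI_ex)

lemma AE_cond_ess_sup_le:
  assumes "finite_measure M" and "subalgebra M N" and "X \<in> borel_measurable M"
    and "S \<in> borel_measurable N" and "AE \<omega> in M. X \<omega> \<le> S \<omega>"
  shows "AE \<omega> in M. cond_ess_sup M N X \<omega> \<le> S \<omega>"
  using is_cond_ess_sup_cond_ess_sup[OF assms(1-3)] assms(4,5)
  unfolding is_cond_ess_sup_def by blast

lemma AE_le_cond_ess_inf:
  assumes "finite_measure M" and "subalgebra M N" and "X \<in> borel_measurable M"
    and "S \<in> borel_measurable N" and "AE \<omega> in M. S \<omega> \<le> X \<omega>"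
  shows "AE \<omega> in M. S \<omega> \<le> cond_ess_inf M N X \<omega>"
proof -
  have "AE \<omega> in M. cond_ess_sup M N (\<lambda>\<omega>. - X \<omega>) \<omega> \<le> - S \<omega>"
    using assms by (intro AE_cond_ess_sup_le) auto
  then show ?thesis
    by eventually_elim (metis cond_ess_inf_def ereal_minus_le_minus ereal_uminus_uminus)
qed

locale decomposable_cond_indicator =
  fixes M N :: "'a measure" and D :: "('a \<Rightarrow> ereal) set"
    and I :: "('a \<Rightarrow> ereal) \<Rightarrow> ('a \<Rightarrow> ereal)"
  assumes finite_measure: "finite_measure M"
    and subalgebra: "subalgebra M N"
    and cond_indicator: "cond_indicator M N D I"
    and decomposable: "decomposable N D"
begin

lemma space_N: "space N = space M"
  using subalgebra by (simp add: subalgebra_def)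

lemma D_measurable: "X \<in> D \<Longrightarrow> X \<in> borel_measurable M"
  using cond_indicator by (auto simp: cond_indicator_def)

lemma zero_mem_D: "(\<lambda>_. 0) \<in> D"
  using cond_indicator by (simp add: cond_indicator_def)

lemma AE_eq_imp_AE_eq_I:
  "X \<in> D \<Longrightarrow> Y \<in> D \<Longrightarrow> AE \<omega> in M. X \<omega> = Y \<omega> \<Longrightarrow> AE \<omega> in M. I X \<omega> = I Y \<omega>"
  using cond_indicator by (simp add: cond_indicator_def)

lemma AE_I_between:
  "X \<in> D \<Longrightarrow> AE \<omega> in M. cond_ess_inf M N X \<omega> \<le> I X \<omega> \<and> I X \<omega> \<le> cond_ess_sup M N X \<omega>"
  using cond_indicator by (simp add: cond_indicator_def)

lemma Diff_mem_sets_N: "A \<in> sets N \<Longrightarrow> space M - A \<in> sets N"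
  using space_N by (metis sets.compl_sets)

lemma AE_I_vanishes_on:
  assumes "Z \<in> D" and "A \<in> sets N" and "AE \<omega> in M. \<omega> \<in> A \<longrightarrow> Z \<omega> = 0"
  shows "AE \<omega> in M. \<omega> \<in> A \<longrightarrow> I Z \<omega> = 0"
proof -
  \<comment> \<open>An N-measurable a.s. upper bound of both Z and -Z that is 0 on A.\<close>
  define T :: "'a \<Rightarrow> ereal" where "T = (\<lambda>\<omega>. if \<omega> \<in> A then 0 else \<infinity>)"
  have "T \<in> borel_measurable N"
    unfolding T_def using \<open>A \<in> sets N\<close> by (intro measurable_If_set) auto
  then have T: "T \<in> borel_measurable N" "(\<lambda>\<omega>. - T \<omega>) \<in> borel_measurable N" by auto
  have "AE \<omega> in M. cond_ess_sup M N Z \<omega> \<le> T \<omega>"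
    using assms(3) D_measurable[OF \<open>Z \<in> D\<close>] T(1)
    by (intro AE_cond_ess_sup_le finite_measure subalgebra) (auto simp: T_def)
  moreover have "AE \<omega> in M. - T \<omega> \<le> cond_ess_inf M N Z \<omega>"
    using assms(3) D_measurable[OF \<open>Z \<in> D\<close>] T(2)
    by (intro AE_le_cond_ess_inf finite_measure subalgebra) (auto simp: T_def)
  ultimately show ?thesis
    using AE_I_between[OF \<open>Z \<in> D\<close>] by eventually_elim (auto simp: T_def)
qed

lemma indicator_times_mem_D:
  assumes "X \<in> D" and "A \<in> sets N"
  shows "(\<lambda>\<omega>. indicator A \<omega> * X \<omega>) \<in> D"
  using decomposable[unfolded decomposable_def, rule_format, OF assms(1) zero_mem_D assms(2)]
  by (simp add: mult.commute)

lemma AE_I_indicator_times_vanishes_outside: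
  assumes "X \<in> D" and "A \<in> sets N"
  shows "AE \<omega> in M. \<omega> \<notin> A \<longrightarrow> I (\<lambda>\<omega>. indicator A \<omega> * X \<omega>) \<omega> = 0"
proof -
  from \<open>A \<in> sets N\<close> have "space M - A \<in> sets N" by (rule Diff_mem_sets_N)
  then have "AE \<omega> in M. \<omega> \<in> space M - A \<longrightarrow> I (\<lambda>\<omega>. indicator A \<omega> * X \<omega>) \<omega> = 0"
    using assms by (intro AE_I_vanishes_on indicator_times_mem_D) auto
  then show ?thesis by auto
qed

lemma indicator_split_mem_D:
  assumes "X \<in> D" and "A \<in> sets N"
  shows "(\<lambda>\<omega>. indicator A \<omega> * X \<omega> + indicator (space M - A) \<omega> * X \<omega>) \<in> D"
  using decomposable[unfolded decomposable_def, rule_format, OF assms(1) assms(1) assms(2)]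
  by (simp add: mult.commute space_N)

lemma indicator_splitE:
  assumes "X \<in> D" and "A \<in> sets N"
  obtains X\<^sub>A X\<^sub>B where "X\<^sub>A = (\<lambda>\<omega>. indicator A \<omega> * X \<omega>)"
    and "X\<^sub>A \<in> D" and "X\<^sub>B \<in> D" and "(\<lambda>\<omega>. X\<^sub>A \<omega> + X\<^sub>B \<omega>) \<in> D"
    and "AE \<omega> in M. I (\<lambda>\<omega>. X\<^sub>A \<omega> + X\<^sub>B \<omega>) \<omega> = I X \<omega>"
    and "AE \<omega> in M. \<omega> \<notin> A \<longrightarrow> I X\<^sub>A \<omega> = 0"
    and "AE \<omega> in M. \<omega> \<in> A \<longrightarrow> I X\<^sub>B \<omega> = 0"
proof
  let ?X\<^sub>A = "\<lambda>\<omega>. indicator A \<omega> * X \<omega>" and ?X\<^sub>B = "\<lambda>\<omega>. indicator (space M - A) \<omega> * X \<omega>"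
  have "space M - A \<in> sets N" using \<open>A \<in> sets N\<close> by (rule Diff_mem_sets_N)
  with assms show "?X\<^sub>A \<in> D" "?X\<^sub>B \<in> D" "(\<lambda>\<omega>. ?X\<^sub>A \<omega> + ?X\<^sub>B \<omega>) \<in> D"
    by (auto intro: indicator_times_mem_D indicator_split_mem_D)
  show "AE \<omega> in M. I (\<lambda>\<omega>. ?X\<^sub>A \<omega> + ?X\<^sub>B \<omega>) \<omega> = I X \<omega>"
    using assms by (intro AE_eq_imp_AE_eq_I indicator_split_mem_D AE_I2) (auto simp: indicator_def)
  show "AE \<omega> in M. \<omega> \<notin> A \<longrightarrow> I ?X\<^sub>A \<omega> = 0"
    using assms by (rule AE_I_indicator_times_vanishes_outside)
  have "AE \<omega> in M. \<omega> \<notin> space M - A \<longrightarrow> I ?X\<^sub>B \<omega> = 0"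
    using assms(1) \<open>space M - A \<in> sets N\<close> by (rule AE_I_indicator_times_vanishes_outside)
  then show "AE \<omega> in M. \<omega> \<in> A \<longrightarrow> I ?X\<^sub>B \<omega> = 0" by auto
qed simp

lemma sub_additive_imp_indicator_times_le:
  assumes "sub_additive M D I" and "X \<in> D" and "A \<in> sets N"
  shows "AE \<omega> in M. indicator A \<omega> * I X \<omega> \<le> I (\<lambda>\<omega>. indicator A \<omega> * X \<omega>) \<omega>"
proof -
  obtain X\<^sub>A X\<^sub>B where X\<^sub>A: "X\<^sub>A = (\<lambda>\<omega>. indicator A \<omega> * X \<omega>)" and mem: "X\<^sub>A \<in> D" "X\<^sub>B \<in> D"
    "(\<lambda>\<omega>. X\<^sub>A \<omega> + X\<^sub>B \<omega>) \<in> D" and split: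
    "AE \<omega> in M. I (\<lambda>\<omega>. X\<^sub>A \<omega> + X\<^sub>B \<omega>) \<omega> = I X \<omega>"
    "AE \<omega> in M. \<omega> \<notin> A \<longrightarrow> I X\<^sub>A \<omega> = 0"
    "AE \<omega> in M. \<omega> \<in> A \<longrightarrow> I X\<^sub>B \<omega> = 0"
    using assms(2,3) by (rule indicator_splitE)
  from \<open>sub_additive M D I\<close> mem
  have "AE \<omega> in M. I (\<lambda>\<omega>. X\<^sub>A \<omega> + X\<^sub>B \<omega>) \<omega> \<le> I X\<^sub>A \<omega> + I X\<^sub>B \<omega>"
    unfolding sub_additive_def by blast
  with split show ?thesis
    unfolding X\<^sub>A[symmetric] by eventually_elim (auto simp: indicator_def)
qed

lemma additive_imp_AE_I_eq_on:
  assumes "additive M D I" and "X \<in> D" and "A \<in> sets N"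
  shows "AE \<omega> in M. \<omega> \<in> A \<longrightarrow> I X \<omega> = I (\<lambda>\<omega>. indicator A \<omega> * X \<omega>) \<omega>"
proof -
  obtain X\<^sub>A X\<^sub>B where X\<^sub>A: "X\<^sub>A = (\<lambda>\<omega>. indicator A \<omega> * X \<omega>)" and mem: "X\<^sub>A \<in> D" "X\<^sub>B \<in> D"
    "(\<lambda>\<omega>. X\<^sub>A \<omega> + X\<^sub>B \<omega>) \<in> D" and split:
    "AE \<omega> in M. I (\<lambda>\<omega>. X\<^sub>A \<omega> + X\<^sub>B \<omega>) \<omega> = I X \<omega>"
    "AE \<omega> in M. \<omega> \<notin> A \<longrightarrow> I X\<^sub>A \<omega> = 0"
    "AE \<omega> in M. \<omega> \<in> A \<longrightarrow> I X\<^sub>B \<omega> = 0"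
    using assms(2,3) by (rule indicator_splitE)
  from \<open>additive M D I\<close> mem
  have "AE \<omega> in M. I (\<lambda>\<omega>. X\<^sub>A \<omega> + X\<^sub>B \<omega>) \<omega> = I X\<^sub>A \<omega> + I X\<^sub>B \<omega>"
    unfolding additive_def by blast
  with split show ?thesis
    unfolding X\<^sub>A[symmetric]
  proof eventually_elim
    case (elim \<omega>)
    show ?case
    proof
      assume "\<omega> \<in> A"
      with elim(3) have "I X\<^sub>B \<omega> = 0" by simp
      with elim(1,4) show "I X \<omega> = I X\<^sub>A \<omega>" by simp
    qed
  qed
qed

lemma additive_imp_regular:
  assumes "additive M D I"
  shows "regular M N D I"
  unfolding regular_def
proof (intro conjI ballI impI decomposable)
  fix X Y A assume "X \<in> D" "Y \<in> D" "A \<in> sets N"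
    and "AE \<omega> in M. X \<omega> * indicator A \<omega> = Y \<omega> * indicator A \<omega>"
  then have "AE \<omega> in M. I (\<lambda>\<omega>. indicator A \<omega> * X \<omega>) \<omega> = I (\<lambda>\<omega>. indicator A \<omega> * Y \<omega>) \<omega>"
    by (intro AE_eq_imp_AE_eq_I indicator_times_mem_D) (auto simp: mult.commute)
  with additive_imp_AE_I_eq_on[OF assms \<open>X \<in> D\<close> \<open>A \<in> sets N\<close>]
    additive_imp_AE_I_eq_on[OF assms \<open>Y \<in> D\<close> \<open>A \<in> sets N\<close>]
  show "AE \<omega> in M. I X \<omega> * indicator A \<omega> = I Y \<omega> * indicator A \<omega>"
  proof eventually_elim
    case (elim \<omega>)
    then have "\<omega> \<in> A \<Longrightarrow> I X \<omega> = I Y \<omega>" by simp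
    then show ?case by (cases "\<omega> \<in> A") simp_all
  qed
qed

end

theorem mainTheorem16:
  fixes M N :: "'a measure" and D :: "('a \<Rightarrow> ereal) set"
    and I :: "('a \<Rightarrow> ereal) \<Rightarrow> ('a \<Rightarrow> ereal)"
  assumes "prob_space M" and "complete_measure M" and "complete_subalg M N"
    and "cond_indicator M N D I" and "decomposable N D"
  shows "(sub_additive M D I \<longrightarrow>
           (\<forall>A \<in> sets N. \<forall>X \<in> D.
              AE \<omega> in M. indicator A \<omega> * I X \<omega> \<le> I (\<lambda>\<omega>'. indicator A \<omega>' * X \<omega>') \<omega>))
         \<and> (additive M D I \<longrightarrow> regular M N D I)"
proof -
  have "finite_measure M" using \<open>prob_space M\<close> by (rule prob_space.finite_measure)
  moreover have "subalgebra M N" using \<open>complete_subalg M N\<close> by (simp add: complete_subalg_def)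
  ultimately interpret decomposable_cond_indicator M N D I
    using \<open>cond_indicator M N D I\<close> \<open>decomposable N D\<close> by (rule decomposable_cond_indicator.intro)
  show ?thesis
    by (intro conjI impI ballI sub_additive_imp_indicator_times_le additive_imp_regular)
qed

end
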